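(* If $B^{(0)}(X,Y),\dots,B^{(\ell)}(X,Y)\in\mathbb F_q[X,Y]$ is a basis of the $\mathbb F_q[X]$-module $M_{s,\ell}$, then $B^{(0)},\dots,B^{(\ell)},\,Y^{\ell-s+1}(Y-R(X))^s$ is a basis of $M_{s,\ell+1}$.
   Context: Let $\mathbb F_q$ be a finite field and $n<q$. Let $\alpha_0,\dots,\alpha_{n-1}$ be distinct nonzero elements of $\mathbb F_q$, $w_0,\dots,w_{n-1}$ nonzero elements of $\mathbb F_q$, $r\in\mathbb F_q^n$, $r_i'=r_i/w_i$, and $R(X)$ the unique polynomial of degree less than $n$ with $R(\alpha_i)=r_i'$. For positive integers $s\le\ell$, $M_{s,\ell}$ is the $\mathbb F_q[X]$-module of all $Q\in\mathbb F_q[X,Y]$ of $Y$-degree at most $\ell$ such that for every $i$, $Q(X+\alpha_i,Y+r_i')$ has no monomials of total degree less than $s$. *)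

theory Defs
  imports "HOL-Computational_Algebra.Polynomial"
begin

text \<open>Bivariate polynomials F[X,Y] are represented as 'a poly poly: an outer polynomial
  in Y whose coefficients are polynomials in X. The Y-degree is the outer degree;
  the coefficient of X^i Y^j in Q is coeff (coeff Q j) i.\<close>

definition shiftXY :: "'a::comm_ring_1 poly poly \<Rightarrow> 'a \<Rightarrow> 'a \<Rightarrow> 'a poly poly" where
  "shiftXY Q a b = map_poly (\<lambda>p. pcompose p [:a, 1:]) (pcompose Q [:[:b:], 1:])"
  \<comment> \<open>Q(X + a, Y + b)\<close>

definition no_low_monomials :: "'a::comm_ring_1 poly poly \<Rightarrow> nat \<Rightarrow> bool" where
  "no_low_monomials Q s \<longleftrightarrow> (\<forall>i j. i + j < s \<longrightarrow> coeff (coeff Q j) i = 0)"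

definition Mmod :: "nat \<Rightarrow> (nat \<Rightarrow> 'a::comm_ring_1) \<Rightarrow> (nat \<Rightarrow> 'a) \<Rightarrow> nat \<Rightarrow> nat \<Rightarrow> 'a poly poly set" where
  "Mmod n alpha rr s l = {Q. degree Q \<le> l \<and>
      (\<forall>i<n. no_low_monomials (shiftXY Q (alpha i) (rr i)) s)}"

definition is_module_basis :: "'a::comm_ring_1 poly poly set \<Rightarrow> (nat \<Rightarrow> 'a poly poly) \<Rightarrow> nat \<Rightarrow> bool" where
  "is_module_basis M b m \<longleftrightarrow>
     (\<forall>k<m. b k \<in> M) \<and>
     (\<forall>Q\<in>M. \<exists>c :: nat \<Rightarrow> 'a poly. Q = (\<Sum>k<m. smult (c k) (b k))) \<and>
     (\<forall>c :: nat \<Rightarrow> 'a poly. (\<Sum>k<m. smult (c k) (b k)) = 0 \<longrightarrow> (\<forall>k<m. c k = 0))"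

end

theory Submission
  imports Defs
begin

text \<open>Every element of \<open>M\<^sub>s\<^sub>,\<^sub>l\<^sub>+\<^sub>1\<close> becomes an element of \<open>M\<^sub>s\<^sub>,\<^sub>l\<close> after subtracting
  a suitable \<open>\<bbbF>\<^sub>q[X]\<close>-multiple of \<open>P = Y\<^bsup>l-s+1\<^esup>(Y - R(X))\<^sup>s\<close>, because \<open>P\<close> is monic of
  \<open>Y\<close>-degree \<open>l + 1\<close> and itself lies in \<open>M\<^sub>s\<^sub>,\<^sub>l\<^sub>+\<^sub>1\<close>: the factor \<open>Y - R(X)\<close> vanishes at
  every point \<open>(\<alpha>\<^sub>i, r'\<^sub>i)\<close>, so its \<open>s\<close>-th power vanishes there to order \<open>s\<close>.
  Comparing the coefficients of \<open>Y\<^bsup>l+1\<^esup>\<close> shows that adjoining \<open>P\<close> keeps the family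
  independent.\<close>

lemma is_module_basis_extend_monic:
  fixes M M' :: "'a::comm_ring_1 poly poly set"
  assumes basis: "is_module_basis M b m"
    and M_eq: "M = {Q \<in> M'. degree Q \<le> l}"
    and deg_M': "\<And>Q. Q \<in> M' \<Longrightarrow> degree Q \<le> Suc l"
    and P: "P \<in> M'" "degree P = Suc l" "lead_coeff P = 1"
    and closed: "\<And>Q a. Q \<in> M' \<Longrightarrow> Q + smult a P \<in> M'"
  shows "is_module_basis M' (b(m := P)) (Suc m)"
proof -
  have sum_split: "(\<Sum>k<Suc m. smult (c k) ((b(m := P)) k))
      = (\<Sum>k<m. smult (c k) (b k)) + smult (c m) P" for c
    by (simp add: lessThan_Suc sum.lessThan_Suc)
  have mem: "\<forall>k<Suc m. (b(m := P)) k \<in> M'"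
    using basis P(1) unfolding is_module_basis_def M_eq by (auto simp: less_Suc_eq)
  have span: "\<exists>c. Q = (\<Sum>k<Suc m. smult (c k) ((b(m := P)) k))" if Q: "Q \<in> M'" for Q
  proof -
    define a where "a = coeff Q (Suc l)"
    have "degree (Q + smult (- a) P) \<le> l"
    proof (rule degree_le, intro allI impI)
      fix j assume "l < j"
      then consider "j = Suc l" | "Suc l < j" by linarith
      then show "coeff (Q + smult (- a) P) j = 0"
        by cases (use P deg_M'[OF Q] in \<open>auto simp: a_def coeff_eq_0\<close>)
    qed
    with closed[OF Q] have "Q + smult (- a) P \<in> M"
      unfolding M_eq by blast
    then obtain d where "Q + smult (- a) P = (\<Sum>k<m. smult (d k) (b k))"
      using basis unfolding is_module_basis_def by blast
    then have "Q = (\<Sum>k<Suc m. smult ((d(m := a)) k) ((b(m := P)) k))"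
      unfolding sum_split by (simp add: algebra_simps)
    then show ?thesis by blast
  qed
  have indep: "\<forall>k<Suc m. c k = 0" if eq: "(\<Sum>k<Suc m. smult (c k) ((b(m := P)) k)) = 0" for c
  proof -
    define S where "S = (\<Sum>k<m. smult (c k) (b k))"
    have "degree S \<le> l"
      unfolding S_def
    proof (rule degree_sum_le)
      fix k assume "k \<in> {..<m}"
      with basis have "degree (b k) \<le> l"
        unfolding is_module_basis_def M_eq by auto
      then show "degree (smult (c k) (b k)) \<le> l"
        using degree_smult_le order_trans by blast
    qed simp
    moreover have S_P: "S + smult (c m) P = 0"
      using eq unfolding sum_split S_def .
    then have "coeff (S + smult (c m) P) (Suc l) = 0" by simp
    ultimately have cm: "c m = 0"
      using P by (simp add: coeff_eq_0)
    with S_P have "S = 0" by simp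
    with basis have "\<forall>k<m. c k = 0"
      unfolding is_module_basis_def S_def by blast
    with cm show ?thesis by (auto simp: less_Suc_eq)
  qed
  show ?thesis
    using mem span indep unfolding is_module_basis_def by blast
qed

lemma map_poly_pcompose_add:
  "map_poly (\<lambda>p. pcompose p c) (P + Q) = map_poly (\<lambda>p. pcompose p c) P + map_poly (\<lambda>p. pcompose p c) Q"
  by (rule poly_eqI) (simp add: coeff_map_poly pcompose_add)

lemma map_poly_pcompose_mult:
  fixes P Q :: "'a::comm_semiring_1 poly poly"
  shows "map_poly (\<lambda>p. pcompose p c) (P * Q) = map_poly (\<lambda>p. pcompose p c) P * map_poly (\<lambda>p. pcompose p c) Q"
  by (rule poly_eqI) (simp add: coeff_map_poly coeff_mult pcompose_sum pcompose_mult)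

lemma shiftXY_add: "shiftXY (P + Q) a b = shiftXY P a b + shiftXY Q a b"
  unfolding shiftXY_def by (simp add: pcompose_add map_poly_pcompose_add)

lemma shiftXY_mult: "shiftXY (P * Q) a b = shiftXY P a b * shiftXY Q a b"
  unfolding shiftXY_def by (simp add: pcompose_mult map_poly_pcompose_mult)

lemma shiftXY_1: "shiftXY 1 a b = 1"
  unfolding shiftXY_def by (simp add: pcompose_1)

lemma shiftXY_power: "shiftXY (P ^ k) a b = shiftXY P a b ^ k"
  by (induction k) (simp_all add: shiftXY_1 shiftXY_mult)

lemma no_low_monomials_0: "no_low_monomials Q 0"
  unfolding no_low_monomials_def by simp

lemma no_low_monomials_add:
  "no_low_monomials P s \<Longrightarrow> no_low_monomials Q s \<Longrightarrow> no_low_monomials (P + Q) s"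
  unfolding no_low_monomials_def by simp

lemma no_low_monomials_mult:
  assumes P: "no_low_monomials P s" and Q: "no_low_monomials Q t"
  shows "no_low_monomials (P * Q) (s + t)"
  unfolding no_low_monomials_def
proof (intro allI impI)
  fix i j assume ij: "i + j < s + t"
  have "coeff (coeff (P * Q) j) i
      = (\<Sum>j1\<le>j. \<Sum>i1\<le>i. coeff (coeff P j1) i1 * coeff (coeff Q (j - j1)) (i - i1))"
    by (simp add: coeff_mult coeff_sum)
  also have "\<dots> = 0"
  proof (intro sum.neutral ballI)
    fix j1 i1 assume "j1 \<in> {..j}" "i1 \<in> {..i}"
    with ij have "i1 + j1 < s \<or> (i - i1) + (j - j1) < t" by auto
    with P Q show "coeff (coeff P j1) i1 * coeff (coeff Q (j - j1)) (i - i1) = 0"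
      unfolding no_low_monomials_def by auto
  qed
  finally show "coeff (coeff (P * Q) j) i = 0" .
qed

lemma no_low_monomials_power:
  "no_low_monomials P 1 \<Longrightarrow> no_low_monomials (P ^ k) k"
  by (induction k) (simp_all add: no_low_monomials_0 no_low_monomials_mult[where s=1, simplified])

lemma no_low_monomials_shiftXY_linear:
  "poly R a = b \<Longrightarrow> no_low_monomials (shiftXY [:- R, 1:] a b) 1"
  unfolding no_low_monomials_def shiftXY_def
  by (simp add: pcompose_pCons coeff_map_poly)

lemma Mmod_restrict:
  "l \<le> l' \<Longrightarrow> Mmod n alpha rr s l = {Q \<in> Mmod n alpha rr s l'. degree Q \<le> l}"
  unfolding Mmod_def by auto

lemma Mmod_add_mult:
  assumes "Q \<in> Mmod n alpha rr s l" "P \<in> Mmod n alpha rr s l'" "degree (Q + A * P) \<le> l"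
  shows "Q + A * P \<in> Mmod n alpha rr s l"
proof -
  have "no_low_monomials (shiftXY Q a b + shiftXY A a b * shiftXY P a b) s"
    if "no_low_monomials (shiftXY Q a b) s" "no_low_monomials (shiftXY P a b) s" for a b
    using no_low_monomials_mult[OF no_low_monomials_0 that(2)] that(1)
    by (simp add: no_low_monomials_add)
  with assms show ?thesis
    unfolding Mmod_def by (simp add: shiftXY_add shiftXY_mult)
qed

lemma monom_mult_linear_power_in_Mmod:
  assumes "\<And>i. i < n \<Longrightarrow> poly R (alpha i) = rr i"
  shows "monom 1 k * [:- R, 1:] ^ s \<in> Mmod n alpha rr s (k + s)"
  unfolding Mmod_def
proof (intro CollectI conjI allI impI)
  show "degree (monom 1 k * [:- R, 1:] ^ s) \<le> k + s"
    using degree_monom_le[of 1 k] degree_power_le[of "[:- R, 1:]" s]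
    by (intro order_trans[OF degree_mult_le] add_mono) simp_all
  fix i assume "i < n"
  then have "no_low_monomials (shiftXY [:- R, 1:] (alpha i) (rr i) ^ s) s"
    using assms by (intro no_low_monomials_power no_low_monomials_shiftXY_linear)
  then show "no_low_monomials (shiftXY (monom 1 k * [:- R, 1:] ^ s) (alpha i) (rr i)) s"
    using no_low_monomials_mult[OF no_low_monomials_0] by (simp add: shiftXY_mult shiftXY_power)
qed

lemma monom_mult_linear_power_monic:
  fixes R :: "'a::idom poly"
  shows "degree (monom 1 k * [:- R, 1:] ^ s) = k + s"
    and "lead_coeff (monom 1 k * [:- R, 1:] ^ s) = 1"
  by (simp add: degree_mult_eq degree_power_eq degree_monom_eq)
    (simp only: lead_coeff_mult lead_coeff_power, simp add: degree_monom_eq)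

theorem lemma7:
  fixes alpha w r :: "nat \<Rightarrow> 'a::{finite,field}"
    and n s l :: nat
    and R :: "'a poly"
    and B :: "nat \<Rightarrow> 'a poly poly"
  assumes "n < card (UNIV :: 'a set)"
    and "inj_on alpha {..<n}"
    and "\<And>i. i < n \<Longrightarrow> alpha i \<noteq> 0"
    and "\<And>i. i < n \<Longrightarrow> w i \<noteq> 0"
    and "R = 0 \<or> degree R < n"
    and interp: "\<And>i. i < n \<Longrightarrow> poly R (alpha i) = r i / w i"
    and "0 < s" and "s \<le> l"
    and basis: "is_module_basis (Mmod n alpha (\<lambda>i. r i / w i) s l) B (l + 1)"
  shows "is_module_basis (Mmod n alpha (\<lambda>i. r i / w i) s (l + 1))
           (B(l + 1 := monom 1 (l - s + 1) * [:- R, 1:] ^ s)) (l + 2)"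
proof -
  define M' where "M' = Mmod n alpha (\<lambda>i. r i / w i) s (Suc l)"
  define P where "P = monom 1 (l - s + 1) * [:- R, 1:] ^ s"
  have "l - s + 1 + s = Suc l" using \<open>s \<le> l\<close> by simp
  then have P: "P \<in> M'" "degree P = Suc l" "lead_coeff P = 1"
    using monom_mult_linear_power_in_Mmod[where k = "l - s + 1" and s = s and n = n, OF interp]
      monom_mult_linear_power_monic[of "l - s + 1" R s]
    unfolding M'_def P_def by simp_all
  have closed: "Q + smult a P \<in> M'" if Q: "Q \<in> M'" for Q a
  proof -
    have "degree Q \<le> Suc l" using Q unfolding M'_def Mmod_def by simp
    with P(2) have "degree (Q + [:a:] * P) \<le> Suc l"
      by (simp add: degree_add_le order_trans[OF degree_smult_le])
    with Q P(1) show ?thesis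
      unfolding M'_def using Mmod_add_mult by fastforce
  qed
  have "is_module_basis M' (B(Suc l := P)) (Suc (Suc l))"
    by (rule is_module_basis_extend_monic[OF basis[simplified] _ _ P closed])
      (auto simp: M'_def Mmod_restrict[of l "Suc l"] Mmod_def)
  then show ?thesis unfolding M'_def P_def by simp
qed

end
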